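(* Let $P=(p_1,\dots,p_n)$ be points in $\mathbb{R}^d$, $\mathcal{F}$ a constraint for $k$-CMeans, and $\mathcal{C}=\{c_1,\dots,c_k\}\subset\mathbb{R}^d$ with $\omega=\frac1n\sum_{i=1}^n\min_{c\in\mathcal{C}}\|p_i-c\|^2$. For each $i$ let $\tilde p_i$ be a point of $\mathcal{C}$ nearest to $p_i$, and let $\tilde P=(\tilde p_1,\dots,\tilde p_n)$. Let $\delta^2_{opt}$ and $\tilde\delta^2_{opt}$ be the optimal $k$-CMeans values of $P$ and $\tilde P$ (with the same $\mathcal{F}$), and let $\delta^2_{opt}([\mathcal{C}]^k)=\min_{(S_j)\in\mathcal{F}}\min_{(q_1,\dots,q_k)\in\mathcal{C}^k}\frac1n\sum_j\sum_{i\in S_j}\|p_i-q_j\|^2$. Then $\tilde\delta^2_{opt}\le 2\omega+2\delta^2_{opt}$ and $\delta^2_{opt}([\mathcal{C}]^k)\le 2\omega+8\tilde\delta^2_{opt}$.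
   Context: A constraint for $k$-CMeans is a nonempty family $\mathcal{F}$ of ordered partitions $(S_1,\dots,S_k)$ of $\{1,\dots,n\}$ into $k$ parts. For a sequence $X=(x_1,\dots,x_n)$ its optimal $k$-CMeans value is $\min_{(S_j)\in\mathcal{F}}\min_{c'_1,\dots,c'_k\in\mathbb{R}^d}\frac1n\sum_j\sum_{i\in S_j}\|x_i-c'_j\|^2$. *)

theory Defs
  imports "HOL-Analysis.Analysis"
begin

definition ordered_partition :: "nat \<Rightarrow> nat \<Rightarrow> (nat \<Rightarrow> nat set) \<Rightarrow> bool" where
  "ordered_partition n k S \<longleftrightarrow>
     (\<Union>j\<in>{1..k}. S j) = {1..n} \<and>
     (\<forall>j\<in>{1..k}. \<forall>j'\<in>{1..k}. j \<noteq> j' \<longrightarrow> S j \<inter> S j' = {}) \<and>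
     (\<forall>j. j \<notin> {1..k} \<longrightarrow> S j = {})"

definition cmeans_constraint :: "nat \<Rightarrow> nat \<Rightarrow> (nat \<Rightarrow> nat set) set \<Rightarrow> bool" where
  "cmeans_constraint n k F \<longleftrightarrow> F \<noteq> {} \<and> (\<forall>S\<in>F. ordered_partition n k S)"

definition cmeans_cost :: "nat \<Rightarrow> nat \<Rightarrow> (nat \<Rightarrow> 'a::euclidean_space) \<Rightarrow> (nat \<Rightarrow> nat set) \<Rightarrow> (nat \<Rightarrow> 'a) \<Rightarrow> real" where
  "cmeans_cost n k X S c = (1 / real n) * (\<Sum>j=1..k. \<Sum>i\<in>S j. (norm (X i - c j))\<^sup>2)"

definition opt_cmeans :: "nat \<Rightarrow> nat \<Rightarrow> (nat \<Rightarrow> nat set) set \<Rightarrow> (nat \<Rightarrow> 'a::euclidean_space) \<Rightarrow> real" where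
  "opt_cmeans n k F X = (INF S\<in>F. INF c. cmeans_cost n k X S c)"

definition opt_cmeans_in :: "nat \<Rightarrow> nat \<Rightarrow> (nat \<Rightarrow> nat set) set \<Rightarrow> (nat \<Rightarrow> 'a::euclidean_space) \<Rightarrow> 'a set \<Rightarrow> real" where
  "opt_cmeans_in n k F X C = (INF S\<in>F. INF q\<in>{q. \<forall>j\<in>{1..k}. q j \<in> C}. cmeans_cost n k X S q)"

end

theory Submission
  imports Defs
begin

text \<open>Moving each point \<open>p\<^sub>i\<close> to its nearest centre \<open>pt\<^sub>i\<close> costs \<open>\<omega>\<close> on average, so by
  \<open>\<parallel>x - z\<parallel>\<^sup>2 \<le> 2\<parallel>x - y\<parallel>\<^sup>2 + 2\<parallel>y - z\<parallel>\<^sup>2\<close> any clustering costs at most \<open>2\<omega>\<close> plus twice its cost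
  for the other sequence. For the second bound, snap each centre \<open>d\<^sub>j\<close> of a clustering of the
  \<open>pt\<^sub>i\<close> to a nearest point \<open>q\<^sub>j\<close> of \<open>C\<close>; as \<open>pt\<^sub>i \<in> C\<close>, \<open>\<parallel>d\<^sub>j - q\<^sub>j\<parallel> \<le> \<parallel>d\<^sub>j - pt\<^sub>i\<parallel>\<close>, hence
  \<open>\<parallel>p\<^sub>i - q\<^sub>j\<parallel> \<le> \<parallel>p\<^sub>i - pt\<^sub>i\<parallel> + 2\<parallel>pt\<^sub>i - d\<^sub>j\<parallel>\<close>, and squaring gives the constants 2 and 8.\<close>

lemma ordered_partition_part_subset:
  assumes "ordered_partition n k S"
  shows "S j \<subseteq> {1..n}"
  using assms unfolding ordered_partition_def by (cases "j \<in> {1..k}") auto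

lemma sum_ordered_partition:
  assumes "ordered_partition n k S"
  shows "(\<Sum>j=1..k. \<Sum>i\<in>S j. f i) = (\<Sum>i=1..n. f i)"
proof -
  have parts: "(\<Union>j\<in>{1..k}. S j) = {1..n}"
    and disj: "\<forall>j\<in>{1..k}. \<forall>j'\<in>{1..k}. j \<noteq> j' \<longrightarrow> S j \<inter> S j' = {}"
    using assms unfolding ordered_partition_def by auto
  have "\<forall>j\<in>{1..k}. finite (S j)"
    using ordered_partition_part_subset[OF assms] by (meson finite_atLeastAtMost finite_subset)
  then have "sum f (\<Union>j\<in>{1..k}. S j) = (\<Sum>j=1..k. sum f (S j))"
    using disj by (intro sum.UNION_disjoint) auto
  then show ?thesis
    using parts by simp
qed

lemma cmeans_cost_nonneg: "cmeans_cost n k X S d \<ge> 0"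
  unfolding cmeans_cost_def by (intro mult_nonneg_nonneg sum_nonneg) auto

lemma norm_diff_sq_le:
  fixes x y z :: "'a::real_normed_vector"
  shows "(norm (x - z))\<^sup>2 \<le> 2 * (norm (x - y))\<^sup>2 + 2 * (norm (y - z))\<^sup>2"
proof -
  have "norm (x - z) \<le> norm (x - y) + norm (y - z)"
    using norm_triangle_ineq[of "x - y" "y - z"] by simp
  then have "(norm (x - z))\<^sup>2 \<le> (norm (x - y) + norm (y - z))\<^sup>2"
    by (simp add: power_mono)
  also have "\<dots> \<le> 2 * (norm (x - y))\<^sup>2 + 2 * (norm (y - z))\<^sup>2"
    using zero_le_power2[of "norm (x - y) - norm (y - z)"] by (simp add: power2_eq_square algebra_simps)
  finally show ?thesis .
qed

lemma norm_diff_sq_le_nearer: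
  fixes p q t d :: "'a::real_normed_vector"
  assumes "norm (d - q) \<le> norm (d - t)"
  shows "(norm (p - q))\<^sup>2 \<le> 2 * (norm (p - t))\<^sup>2 + 8 * (norm (t - d))\<^sup>2"
proof -
  have "norm (p - q) \<le> norm (p - t) + norm (t - d) + norm (d - q)"
    using norm_triangle_ineq[of "p - t" "t - d"] norm_triangle_ineq[of "p - d" "d - q"] by simp
  also have "norm (d - q) \<le> norm (t - d)"
    using assms by (simp add: norm_minus_commute)
  finally have "(norm (p - q))\<^sup>2 \<le> (norm (p - t) + 2 * norm (t - d))\<^sup>2"
    by (simp add: power_mono)
  also have "\<dots> \<le> 2 * (norm (p - t))\<^sup>2 + 8 * (norm (t - d))\<^sup>2"
    using zero_le_power2[of "norm (p - t) - 2 * norm (t - d)"] by (simp add: power2_eq_square algebra_simps)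
  finally show ?thesis .
qed

lemma cmeans_cost_le_pointwise:
  assumes "ordered_partition n k S"
    and "\<And>j i. j \<in> {1..k} \<Longrightarrow> i \<in> S j \<Longrightarrow>
           (norm (X i - d j))\<^sup>2 \<le> a * (norm (X i - Y i))\<^sup>2 + b * (norm (Y i - e j))\<^sup>2"
  shows "cmeans_cost n k X S d
           \<le> a * ((1 / real n) * (\<Sum>i=1..n. (norm (X i - Y i))\<^sup>2)) + b * cmeans_cost n k Y S e"
proof -
  have "(\<Sum>j=1..k. \<Sum>i\<in>S j. (norm (X i - d j))\<^sup>2)
        \<le> (\<Sum>j=1..k. \<Sum>i\<in>S j. a * (norm (X i - Y i))\<^sup>2 + b * (norm (Y i - e j))\<^sup>2)"
    using assms(2) by (intro sum_mono) auto
  also have "\<dots> = a * (\<Sum>j=1..k. \<Sum>i\<in>S j. (norm (X i - Y i))\<^sup>2) + b * (\<Sum>j=1..k. \<Sum>i\<in>S j. (norm (Y i - e j))\<^sup>2)"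
    by (simp add: sum.distrib sum_distrib_left)
  also have "\<dots> = a * (\<Sum>i=1..n. (norm (X i - Y i))\<^sup>2) + b * (\<Sum>j=1..k. \<Sum>i\<in>S j. (norm (Y i - e j))\<^sup>2)"
    by (simp only: sum_ordered_partition[OF assms(1)])
  finally have "(\<Sum>j=1..k. \<Sum>i\<in>S j. (norm (X i - d j))\<^sup>2) / real n
      \<le> (a * (\<Sum>i=1..n. (norm (X i - Y i))\<^sup>2) + b * (\<Sum>j=1..k. \<Sum>i\<in>S j. (norm (Y i - e j))\<^sup>2)) / real n"
    by (rule divide_right_mono) simp
  then show ?thesis
    unfolding cmeans_cost_def by (simp add: add_divide_distrib)
qed

lemma opt_cmeans_in_le_cost:
  assumes "S \<in> F" and "\<forall>j\<in>{1..k}. q j \<in> C"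
  shows "opt_cmeans_in n k F X C \<le> cmeans_cost n k X S q"
proof -
  have bdd: "bdd_below ((\<lambda>q. cmeans_cost n k X S q) ` Q)" for S and Q :: "(nat \<Rightarrow> 'a) set"
    by (rule bdd_belowI[where m = 0]) (auto simp: cmeans_cost_nonneg)
  have "opt_cmeans_in n k F X C \<le> (INF q\<in>{q. \<forall>j\<in>{1..k}. q j \<in> C}. cmeans_cost n k X S q)"
    unfolding opt_cmeans_in_def using assms
    by (intro cINF_lower bdd_belowI[where m = 0]) (auto intro!: cINF_greatest simp: cmeans_cost_nonneg)
  also have "\<dots> \<le> cmeans_cost n k X S q"
    using assms(2) by (intro cINF_lower bdd) auto
  finally show ?thesis .
qed

lemma opt_cmeans_le_cost:
  assumes "S \<in> F"
  shows "opt_cmeans n k F X \<le> cmeans_cost n k X S d"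
  using opt_cmeans_in_le_cost[OF assms, of k d UNIV] unfolding opt_cmeans_def opt_cmeans_in_def by simp

lemma le_affine_opt_cmeans:
  assumes "F \<noteq> {}" and "b > 0"
    and "\<And>S d. S \<in> F \<Longrightarrow> v \<le> a + b * cmeans_cost n k X S d"
  shows "v \<le> a + b * opt_cmeans n k F X"
proof -
  have "(v - a) / b \<le> opt_cmeans n k F X"
    unfolding opt_cmeans_def using assms
    by (intro cINF_greatest) (auto simp: pos_divide_le_eq algebra_simps)
  then show ?thesis
    using assms(2) by (simp add: pos_divide_le_eq algebra_simps)
qed

lemma Min_norm_diff_sq_nearest:
  assumes "finite C" and "y \<in> C" and "\<forall>x\<in>C. norm (p - y) \<le> norm (p - x)"
  shows "Min ((\<lambda>x. (norm (p - x))\<^sup>2) ` C) = (norm (p - y))\<^sup>2"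
  using assms by (intro Min_eqI) (auto simp: power_mono)

lemma cmeans_cost_le_displaced:
  assumes "ordered_partition n k S"
  shows "cmeans_cost n k Y S d
           \<le> 2 * ((1 / real n) * (\<Sum>i=1..n. (norm (X i - Y i))\<^sup>2)) + 2 * cmeans_cost n k X S d"
proof -
  have "(norm (Y i - d j))\<^sup>2 \<le> 2 * (norm (Y i - X i))\<^sup>2 + 2 * (norm (X i - d j))\<^sup>2" for i j :: nat
    by (rule norm_diff_sq_le)
  then have "cmeans_cost n k Y S d
      \<le> 2 * ((1 / real n) * (\<Sum>i=1..n. (norm (Y i - X i))\<^sup>2)) + 2 * cmeans_cost n k X S d"
    by (intro cmeans_cost_le_pointwise[OF assms])
  then show ?thesis
    by (simp add: norm_minus_commute)
qed

lemma cmeans_cost_snap_centers: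
  fixes X Y e :: "nat \<Rightarrow> 'a::euclidean_space"
  assumes "ordered_partition n k S" and "finite C" and "C \<noteq> {}"
    and "\<And>i. i \<in> {1..n} \<Longrightarrow> Y i \<in> C"
  obtains q where "\<And>j. q j \<in> C"
    and "cmeans_cost n k X S q
           \<le> 2 * ((1 / real n) * (\<Sum>i=1..n. (norm (X i - Y i))\<^sup>2)) + 8 * cmeans_cost n k Y S e"
proof -
  have "\<forall>j. \<exists>x. x \<in> C \<and> (\<forall>y\<in>C. dist (e j) x \<le> dist (e j) y)"
    using assms(2,3) by (metis distance_attains_inf finite_imp_closed)
  then obtain q where "\<forall>j. q j \<in> C \<and> (\<forall>y\<in>C. dist (e j) (q j) \<le> dist (e j) y)"
    by (rule choice[THEN exE])
  then have q: "\<And>j. q j \<in> C" "\<And>j y. y \<in> C \<Longrightarrow> norm (e j - q j) \<le> norm (e j - y)"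
    by (auto simp: dist_norm)
  have "(norm (X i - q j))\<^sup>2 \<le> 2 * (norm (X i - Y i))\<^sup>2 + 8 * (norm (Y i - e j))\<^sup>2"
    if "i \<in> S j" for i j
    using ordered_partition_part_subset[OF assms(1)] that assms(4)
    by (intro norm_diff_sq_le_nearer q(2)) blast
  then show ?thesis
    using q(1) by (intro that cmeans_cost_le_pointwise[OF assms(1)])
qed

theorem lemma8:
  fixes P Pt :: "nat \<Rightarrow> 'a::euclidean_space"
    and c :: "nat \<Rightarrow> 'a"
    and n k :: nat
    and F :: "(nat \<Rightarrow> nat set) set"
    and \<omega> :: real
  assumes "n \<ge> 1" and "k \<ge> 1"
    and "cmeans_constraint n k F"
    and "\<omega> = (1 / real n) * (\<Sum>i=1..n. Min ((\<lambda>x. (norm (P i - x))\<^sup>2) ` (c ` {1..k})))"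
    and "\<And>i. i \<in> {1..n} \<Longrightarrow> Pt i \<in> c ` {1..k} \<and>
           (\<forall>x\<in>c ` {1..k}. norm (P i - Pt i) \<le> norm (P i - x))"
  shows "opt_cmeans n k F Pt \<le> 2 * \<omega> + 2 * opt_cmeans n k F P \<and>
         opt_cmeans_in n k F P (c ` {1..k}) \<le> 2 * \<omega> + 8 * opt_cmeans n k F Pt"
proof -
  have F: "F \<noteq> {}" "\<And>S. S \<in> F \<Longrightarrow> ordered_partition n k S"
    using assms(3) unfolding cmeans_constraint_def by auto
  have "Min ((\<lambda>x. (norm (P i - x))\<^sup>2) ` c ` {1..k}) = (norm (P i - Pt i))\<^sup>2" if "i \<in> {1..n}" for i
    using assms(5)[OF that] by (intro Min_norm_diff_sq_nearest) auto
  then have \<omega>: "\<omega> = (1 / real n) * (\<Sum>i=1..n. (norm (P i - Pt i))\<^sup>2)"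
    using assms(4) by simp
  have "opt_cmeans n k F Pt \<le> 2 * \<omega> + 2 * cmeans_cost n k P S d" if "S \<in> F" for S d
    using opt_cmeans_le_cost[OF that, of n k Pt d] cmeans_cost_le_displaced[OF F(2)[OF that], of Pt d P]
    unfolding \<omega> by linarith
  moreover have "opt_cmeans_in n k F P (c ` {1..k}) \<le> 2 * \<omega> + 8 * cmeans_cost n k Pt S d"
    if S: "S \<in> F" for S d
  proof -
    obtain q where "\<And>j. q j \<in> c ` {1..k}"
      and "cmeans_cost n k P S q \<le> 2 * \<omega> + 8 * cmeans_cost n k Pt S d"
      using cmeans_cost_snap_centers[OF F(2)[OF S], of "c ` {1..k}" Pt P d] assms(2,5)
      unfolding \<omega> by auto
    then show ?thesis
      using opt_cmeans_in_le_cost[OF S] by (meson order_trans)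
  qed
  ultimately show ?thesis
    by (auto intro: le_affine_opt_cmeans[OF F(1)])
qed

end
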